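(* The function $v$ satisfies, and is determined by, the following conditions, valid for every integer $n\ge 0$: \begin{itemize} \item $v(0)=0$; \item $v(2n+1)=v(n)$; \item $v(4n+2)=v(2n)+v(n)+b(n)-1$; \item $v(4n+4)=v(2n+2)+v(n)+b(n)-1$. \end{itemize} Equivalently, since $a(n)=v(n)+b(n)-1$, the last two conditions read $v(4n+2)=v(2n)+a(n)$ and $v(4n+4)=v(2n+2)+a(n)$.
   Context: Let $\Sigma^*$ denote the free monoid of finite words over the alphabet $\{0,1,2\}$, with concatenation as product; the empty word is allowed. A word $x_0x_1\cdots x_k\in\Sigma^*$ with $x_0\neq 0$ is a hyperbinary expansion of the nonnegative integer $\sum_{i=0}^k x_i2^{k-i}$. The empty word is the unique hyperbinary expansion of $0$. Write $\mathcal H(n)$ for the set of hyperbinary expansions of $n$, and $b(n)=|\mathcal H(n)|$. The graph $A(n)$ is the directed graph with vertex set $\mathcal H(n)$. Its arcs are the single-step reductions between elements of $\mathcal H(n)$, each carrying one of two labels: \begin{itemize} \item pairs $(\mathbf x02\mathbf y,\mathbf x10\mathbf y)$ and $(2\mathbf y,10\mathbf y)$ are arcs labeled $\to$; \item pairs $(\mathbf x12\mathbf y,\mathbf x20\mathbf y)$ are arcs labeled $\twoheadrightarrow$; \end{itemize} here $\mathbf x,\mathbf y\in\Sigma^*$ and both words must belong to $\mathcal H(n)$. $A(n)$ is connected. Let $a(n)$ be the number of arcs of $A(n)$, and let $v(n)=a(n)-b(n)+1$ be its cyclomatic number, i.e. the cyclomatic number of the underlying undirected graph. *)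

theory Defs
  imports Main
begin

definition hval :: "nat list \<Rightarrow> nat" where
  "hval w = foldl (\<lambda>acc d. 2 * acc + d) 0 w"

definition hyperbin :: "nat \<Rightarrow> nat list set" where
  "hyperbin n = {w. set w \<subseteq> {0,1,2} \<and> (w \<noteq> [] \<longrightarrow> hd w \<noteq> 0) \<and> hval w = n}"

definition b :: "nat \<Rightarrow> nat" where
  "b n = card (hyperbin n)"

datatype arc_label = Arrow | TwoHeadArrow

definition arcs :: "nat \<Rightarrow> (arc_label \<times> nat list \<times> nat list) set" where
  "arcs n =
     {(Arrow, u, w) | u w. u \<in> hyperbin n \<and> w \<in> hyperbin n \<and>
        ((\<exists>x y. u = x @ [0,2] @ y \<and> w = x @ [1,0] @ y) \<or>
         (\<exists>y. u = 2 # y \<and> w = [1,0] @ y))}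
   \<union> {(TwoHeadArrow, u, w) | u w. u \<in> hyperbin n \<and> w \<in> hyperbin n \<and>
        (\<exists>x y. u = x @ [1,2] @ y \<and> w = x @ [2,0] @ y)}"

definition a :: "nat \<Rightarrow> nat" where
  "a n = card (arcs n)"

definition v :: "nat \<Rightarrow> int" where
  "v n = int (a n) - int (b n) + 1"

end

theory Submission
  imports Defs
begin

text \<open>
  Every arc of \<open>A(n)\<close> is a single reduction step between expansions of \<open>n\<close>, the two labels
  never describe the same pair, and reductions preserve the value; so \<open>a(n)\<close> is the sum over
  \<open>\<H>(n)\<close> of the number of reducts of each expansion. Sort expansions by their last digit:
  \<open>\<H>(2m+1) = \<H>(m)\<cdot>1\<close> and \<open>\<H>(2m+2) = \<H>(m+1)\<cdot>0 \<union> \<H>(m)\<cdot>2\<close>. A final \<open>0\<close> or \<open>1\<close> is never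
  rewritten, while a final \<open>2\<close> yields exactly one extra reduct, involving the digit before
  it, unless that digit is itself a \<open>2\<close>. Counting these extra reducts gives
  \<open>a(2m+1) = a(m)\<close> and \<open>a(2m+2) = a(m+1) + a(m) + b(\<lfloor>m/2\<rfloor>)\<close>, next to
  \<open>b(2m+1) = b(m)\<close> and \<open>b(2m+2) = b(m+1) + b(m)\<close>; the recurrences for \<open>v = a - b + 1\<close>
  follow, and they determine \<open>v\<close> by strong induction.
\<close>

lemma hval_Nil [simp]: "hval [] = 0"
  by (simp add: hval_def)

lemma hval_snoc [simp]: "hval (w @ [d]) = 2 * hval w + d"
  by (simp add: hval_def)

lemma hval_append: "hval (xs @ ys) = hval xs * 2 ^ length ys + hval ys"
  by (induction ys rule: rev_induct)
    (simp_all add: algebra_simps append_assoc[symmetric] del: append_assoc)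

lemma hval_Cons [simp]: "hval (d # w) = d * 2 ^ length w + hval w"
  using hval_append[of "[d]" w] by (simp add: hval_def)

lemma mem_hyperbin:
  "w \<in> hyperbin n \<longleftrightarrow> set w \<subseteq> {0,1,2} \<and> (w \<noteq> [] \<longrightarrow> hd w \<noteq> 0) \<and> hval w = n"
  by (simp add: hyperbin_def)

lemma snoc_mem_hyperbin:
  "w @ [d] \<in> hyperbin n \<longleftrightarrow> d \<in> {0,1,2} \<and> 2 * hval w + d = n \<and> set w \<subseteq> {0,1,2}
     \<and> (w \<noteq> [] \<longrightarrow> hd w \<noteq> 0) \<and> (w = [] \<longrightarrow> d \<noteq> 0)"
  by (auto simp: hyperbin_def hd_append)

lemma hval_eq_0_iff: "hval w = 0 \<longleftrightarrow> set w \<subseteq> {0}"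
  by (induction w rule: rev_induct) auto

lemma hyperbin_0: "hyperbin 0 = {[]}"
  by (auto simp: mem_hyperbin hval_eq_0_iff) (metis hd_in_set less_irrefl singletonD subsetD)

lemma hyperbin_odd: "hyperbin (2 * m + 1) = (\<lambda>w. w @ [1]) ` hyperbin m"
proof (rule set_eqI)
  fix u
  show "u \<in> hyperbin (2 * m + 1) \<longleftrightarrow> u \<in> (\<lambda>w. w @ [1]) ` hyperbin m"
  proof (cases u rule: rev_exhaust)
    case (snoc w d)
    have "w @ [d] \<in> hyperbin (2 * m + 1) \<longleftrightarrow> d = 1 \<and> w \<in> hyperbin m"
      by (subst snoc_mem_hyperbin) (auto simp: mem_hyperbin; presburger)
    then show ?thesis using snoc by auto
  qed (auto simp: mem_hyperbin)
qed

lemma hyperbin_even: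
  "hyperbin (2 * m + 2) = (\<lambda>w. w @ [0]) ` hyperbin (m + 1) \<union> (\<lambda>w. w @ [2]) ` hyperbin m"
proof (rule set_eqI)
  fix u
  show "u \<in> hyperbin (2 * m + 2) \<longleftrightarrow>
        u \<in> (\<lambda>w. w @ [0]) ` hyperbin (m + 1) \<union> (\<lambda>w. w @ [2]) ` hyperbin m"
  proof (cases u rule: rev_exhaust)
    case (snoc w d)
    have "w @ [d] \<in> hyperbin (2 * m + 2) \<longleftrightarrow>
          (d = 0 \<and> w \<in> hyperbin (m + 1)) \<or> (d = 2 \<and> w \<in> hyperbin m)"
      by (subst snoc_mem_hyperbin) (auto simp: mem_hyperbin; presburger)
    then show ?thesis using snoc by auto
  qed (auto simp: mem_hyperbin)
qed

lemma nat_0_odd_even_cases: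
  fixes n :: nat
  obtains "n = 0" | m where "n = 2 * m + 1" | m where "n = 2 * m + 2"
proof -
  have "n = 0 \<or> (\<exists>m. n = 2 * m + 1) \<or> (\<exists>m. n = 2 * m + 2)" by presburger
  then show thesis using that by blast
qed

lemma finite_hyperbin: "finite (hyperbin n)"
proof (induction n rule: less_induct)
  case (less n)
  show ?case
  proof (cases n rule: nat_0_odd_even_cases)
    case (2 m)
    then show ?thesis using less[of m] unfolding 2 hyperbin_odd by simp
  next
    case (3 m)
    then show ?thesis using less[of m] less[of "m + 1"] unfolding 3 hyperbin_even by simp
  qed (simp add: hyperbin_0)
qed

lemma inj_on_snoc: "inj_on (\<lambda>w. w @ [d]) A"
  by (simp add: inj_on_def)

lemma b_odd: "b (2 * m + 1) = b m"
  unfolding b_def hyperbin_odd by (simp add: card_image inj_on_snoc)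

lemma b_even: "b (2 * m + 2) = b (m + 1) + b m"
  unfolding b_def hyperbin_even
  by (subst card_Un_disjoint) (auto simp: finite_hyperbin card_image inj_on_snoc)

definition reduces :: "nat list \<Rightarrow> nat list \<Rightarrow> bool" where
  "reduces u w \<longleftrightarrow>
     (\<exists>x y. u = x @ [0,2] @ y \<and> w = x @ [1,0] @ y) \<or> (\<exists>y. u = 2 # y \<and> w = [1,0] @ y) \<or>
     (\<exists>x y. u = x @ [1,2] @ y \<and> w = x @ [2,0] @ y)"

definition reducts :: "nat list \<Rightarrow> nat list set" where
  "reducts u = {w. reduces u w}"

lemma reduces_02: "reduces (x @ [0,2] @ y) (x @ [1,0] @ y)"
  and reduces_leading_2: "reduces (2 # y) ([1,0] @ y)"
  and reduces_12: "reduces (x @ [1,2] @ y) (x @ [2,0] @ y)"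
  by (auto simp: reduces_def)

text \<open>The reducts of \<open>p @ [2]\<close> obtained by rewriting the final digit.\<close>

definition carry_reducts :: "nat list \<Rightarrow> nat list set" where
  "carry_reducts p =
     {w. (p = [] \<and> w = [1,0]) \<or> (\<exists>x. p = x @ [0] \<and> w = x @ [1,0]) \<or>
         (\<exists>x. p = x @ [1] \<and> w = x @ [2,0])}"

lemma carry_reducts_Nil [simp]: "carry_reducts [] = {[1,0]}"
  and carry_reducts_snoc_0 [simp]: "carry_reducts (x @ [0]) = {x @ [1,0]}"
  and carry_reducts_snoc_1 [simp]: "carry_reducts (x @ [1]) = {x @ [2,0]}"
  and carry_reducts_snoc_2 [simp]: "carry_reducts (x @ [2]) = {}"
  by (auto simp: carry_reducts_def)

lemma finite_carry_reducts: "finite (carry_reducts p)"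
  by (cases p rule: rev_exhaust) (auto simp: carry_reducts_def)

lemma reduces_snocE:
  assumes "reduces (p @ [d]) w"
  obtains q where "w = q @ [d]" "reduces p q" | "d = 2" "w \<in> carry_reducts p"
proof -
  consider (A) x y where "p @ [d] = x @ [0,2] @ y" "w = x @ [1,0] @ y"
    | (B) y where "p @ [d] = 2 # y" "w = [1,0] @ y"
    | (C) x y where "p @ [d] = x @ [1,2] @ y" "w = x @ [2,0] @ y"
    using assms unfolding reduces_def by blast
  then show thesis
  proof cases
    case (A x y)
    then show thesis using that
      by (cases y rule: rev_exhaust) (auto simp: carry_reducts_def intro: reduces_02[simplified])
  next
    case (B y)
    then show thesis using that
      by (cases y rule: rev_exhaust)
        (auto simp: carry_reducts_def Cons_eq_append_conv intro: reduces_leading_2[simplified])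
  next
    case (C x y)
    then show thesis using that
      by (cases y rule: rev_exhaust) (auto simp: carry_reducts_def intro: reduces_12[simplified])
  qed
qed

lemma reduces_snoc: "reduces p q \<Longrightarrow> reduces (p @ [d]) (q @ [d])"
  unfolding reduces_def by (elim disjE exE conjE) (metis append.assoc append_Cons)+

lemma carry_reducts_reduces: "w \<in> carry_reducts p \<Longrightarrow> reduces (p @ [2]) w"
  using reduces_02[of _ "[]"] reduces_leading_2[of "[]"] reduces_12[of _ "[]"]
  by (auto simp: carry_reducts_def)

lemma reducts_Nil: "reducts [] = {}"
  by (simp add: reducts_def reduces_def)

lemma reducts_snoc: "d \<noteq> 2 \<Longrightarrow> reducts (p @ [d]) = (\<lambda>q. q @ [d]) ` reducts p"
  unfolding reducts_def by (auto elim: reduces_snocE intro: reduces_snoc)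

lemma reducts_snoc_2: "reducts (p @ [2]) = (\<lambda>q. q @ [2]) ` reducts p \<union> carry_reducts p"
  unfolding reducts_def by (auto elim: reduces_snocE intro: reduces_snoc carry_reducts_reduces)

lemma finite_reducts: "finite (reducts p)"
proof (induction p rule: rev_induct)
  case (snoc d p)
  then show ?case
    by (cases "d = 2") (simp_all add: reducts_snoc reducts_snoc_2 finite_carry_reducts)
qed (simp add: reducts_Nil)

lemma card_reducts_snoc: "d \<noteq> 2 \<Longrightarrow> card (reducts (p @ [d])) = card (reducts p)"
  by (simp add: reducts_snoc card_image inj_on_snoc)

lemma card_reducts_snoc_2: "card (reducts (p @ [2])) = card (reducts p) + card (carry_reducts p)"
proof -
  have "(\<lambda>q. q @ [2]) ` reducts p \<inter> carry_reducts p = {}"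
    by (auto simp: carry_reducts_def)
  then show ?thesis
    by (simp add: reducts_snoc_2 card_Un_disjoint finite_reducts finite_carry_reducts
        card_image inj_on_snoc)
qed

lemma reduces_mem_hyperbin:
  assumes u: "u \<in> hyperbin n" and "reduces u w"
  shows "w \<in> hyperbin n"
proof -
  consider (A) x y where "u = x @ [0,2] @ y" "w = x @ [1,0] @ y"
    | (B) y where "u = 2 # y" "w = [1,0] @ y"
    | (C) x y where "u = x @ [1,2] @ y" "w = x @ [2,0] @ y"
    using \<open>reduces u w\<close> unfolding reduces_def by blast
  then show ?thesis
  proof cases
    case (A x y)
    then have "x \<noteq> []" using u by (auto simp: mem_hyperbin)
    then show ?thesis using u A by (auto simp: mem_hyperbin hval_append)
  next
    case (B y)
    then show ?thesis using u by (auto simp: mem_hyperbin hval_append)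
  next
    case (C x y)
    then show ?thesis using u by (cases x) (auto simp: mem_hyperbin hval_append)
  qed
qed

lemma Arrow_mem_arcs:
  "(Arrow, u, w) \<in> arcs n \<longleftrightarrow> u \<in> hyperbin n \<and> w \<in> hyperbin n \<and>
     ((\<exists>x y. u = x @ [0,2] @ y \<and> w = x @ [1,0] @ y) \<or> (\<exists>y. u = 2 # y \<and> w = [1,0] @ y))"
  and TwoHeadArrow_mem_arcs:
  "(TwoHeadArrow, u, w) \<in> arcs n \<longleftrightarrow> u \<in> hyperbin n \<and> w \<in> hyperbin n \<and>
     (\<exists>x y. u = x @ [1,2] @ y \<and> w = x @ [2,0] @ y)"
  by (simp_all add: arcs_def)

text \<open>An \<open>\<rightarrow>\<close>-step lowers the sum of the squared digits by 3, a \<open>\<twoheadrightarrow>\<close>-step by 1.\<close>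

lemma arc_labels_exclusive: "(Arrow, u, w) \<in> arcs n \<Longrightarrow> (TwoHeadArrow, u, w) \<notin> arcs n"
proof
  define sq :: "nat list \<Rightarrow> nat" where "sq w = sum_list (map (\<lambda>d. d * d) w)" for w
  assume "(Arrow, u, w) \<in> arcs n"
  then have "sq u = sq w + 3"
    unfolding Arrow_mem_arcs by (auto simp: sq_def)
  moreover assume "(TwoHeadArrow, u, w) \<in> arcs n"
  then have "sq u = sq w + 1"
    unfolding TwoHeadArrow_mem_arcs by (auto simp: sq_def)
  ultimately show False by simp
qed

lemma arcs_label_unique: "(l, u, w) \<in> arcs n \<Longrightarrow> (l', u, w) \<in> arcs n \<Longrightarrow> l = l'"
  using arc_labels_exclusive by (cases l; cases l') auto

lemma bij_betw_snd_arcs: "bij_betw snd (arcs n) (SIGMA u:hyperbin n. reducts u)"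
proof (rule bij_betw_imageI)
  show "inj_on snd (arcs n)"
    by (rule inj_onI) (clarsimp simp: arcs_label_unique)
  show "snd ` arcs n = (SIGMA u:hyperbin n. reducts u)"
  proof (rule set_eqI, clarify)
    fix u w
    have "(u, w) \<in> snd ` arcs n \<longleftrightarrow> (\<exists>l. (l, u, w) \<in> arcs n)"
      by force
    also have "\<dots> \<longleftrightarrow> (Arrow, u, w) \<in> arcs n \<or> (TwoHeadArrow, u, w) \<in> arcs n"
      by (metis arc_label.exhaust)
    also have "\<dots> \<longleftrightarrow> u \<in> hyperbin n \<and> w \<in> hyperbin n \<and> reduces u w"
      unfolding Arrow_mem_arcs TwoHeadArrow_mem_arcs reduces_def by blast
    finally show "(u, w) \<in> snd ` arcs n \<longleftrightarrow> (u, w) \<in> (SIGMA u:hyperbin n. reducts u)"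
      by (auto simp: reducts_def intro: reduces_mem_hyperbin)
  qed
qed

lemma a_eq_sum_card_reducts: "a n = (\<Sum>u\<in>hyperbin n. card (reducts u))"
  unfolding a_def bij_betw_same_card[OF bij_betw_snd_arcs]
  by (simp add: card_SigmaI finite_hyperbin finite_reducts)

lemma a_odd: "a (2 * m + 1) = a m"
  unfolding a_eq_sum_card_reducts hyperbin_odd
  by (simp add: sum.reindex inj_on_snoc card_reducts_snoc)

lemma sum_card_carry_reducts: "(\<Sum>q\<in>hyperbin m. card (carry_reducts q)) = b (m div 2)"
proof (cases m rule: nat_0_odd_even_cases)
  case 1
  then show ?thesis by (simp add: hyperbin_0 b_def)
next
  case (2 k)
  then show ?thesis
    unfolding 2 hyperbin_odd
    by (simp add: sum.reindex inj_on_snoc b_def carry_reducts_snoc_1[simplified])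
next
  case (3 k)
  then show ?thesis
    unfolding 3 hyperbin_even
    by (subst sum.union_disjoint) (auto simp: finite_hyperbin sum.reindex inj_on_snoc b_def)
qed

lemma a_even: "a (2 * m + 2) = a (m + 1) + a m + b (m div 2)"
proof -
  have "a (2 * m + 2) = (\<Sum>p\<in>hyperbin (m + 1). card (reducts (p @ [0])))
      + (\<Sum>p\<in>hyperbin m. card (reducts (p @ [2])))"
    unfolding a_eq_sum_card_reducts hyperbin_even
    by (subst sum.union_disjoint) (auto simp: finite_hyperbin sum.reindex inj_on_snoc)
  also have "\<dots> = a (m + 1) + a m + (\<Sum>q\<in>hyperbin m. card (carry_reducts q))"
    by (simp add: card_reducts_snoc card_reducts_snoc_2 sum.distrib a_eq_sum_card_reducts)
  finally show ?thesis by (simp add: sum_card_carry_reducts)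
qed

definition v_recurrence :: "(nat \<Rightarrow> int) \<Rightarrow> bool" where
  "v_recurrence f \<longleftrightarrow>
     f 0 = 0 \<and>
     (\<forall>n. f (2*n+1) = f n) \<and>
     (\<forall>n. f (4*n+2) = f (2*n) + f n + int (b n) - 1) \<and>
     (\<forall>n. f (4*n+4) = f (2*n+2) + f n + int (b n) - 1)"

lemma v_recurrence_v: "v_recurrence v"
  unfolding v_recurrence_def
proof (intro conjI allI)
  fix n
  show "v 0 = 0"
    by (simp add: v_def a_eq_sum_card_reducts b_def hyperbin_0 reducts_Nil)
  show "v (2*n+1) = v n"
    using a_odd[of n] b_odd[of n] by (simp add: v_def)
  have "2*(2*n)+2 = 4*n+2" by simp
  note a_even[of "2*n", unfolded this] b_even[of "2*n", unfolded this]
  then show "v (4*n+2) = v (2*n) + v n + int (b n) - 1"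
    using a_odd[of n] b_odd[of n] by (simp add: v_def)
  have "2*(2*n+1)+2 = 4*n+4" by simp
  note a_even[of "2*n+1", unfolded this] b_even[of "2*n+1", unfolded this]
  then show "v (4*n+4) = v (2*n+2) + v n + int (b n) - 1"
    using a_odd[of n] b_odd[of n] by (simp add: v_def)
qed

lemma v_recurrence_unique:
  assumes "v_recurrence f" "v_recurrence g"
  shows "f = g"
proof
  fix n show "f n = g n"
  proof (induction n rule: less_induct)
    case (less n)
    have "n = 0 \<or> (\<exists>m. n = 2*m+1) \<or> (\<exists>m. n = 4*m+2) \<or> (\<exists>m. n = 4*m+4)"
      by presburger
    then show ?case
      using assms less[of "n div 2"] less[of "n div 4"] less[of "n div 2 - 1"]
      unfolding v_recurrence_def by auto
  qed
qed

theorem mainTheorem1: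
  shows "(v 0 = 0 \<and>
          (\<forall>n. v (2*n+1) = v n) \<and>
          (\<forall>n. v (4*n+2) = v (2*n) + v n + int (b n) - 1) \<and>
          (\<forall>n. v (4*n+4) = v (2*n+2) + v n + int (b n) - 1)) \<and>
         (\<forall>f :: nat \<Rightarrow> int.
            (f 0 = 0 \<and>
             (\<forall>n. f (2*n+1) = f n) \<and>
             (\<forall>n. f (4*n+2) = f (2*n) + f n + int (b n) - 1) \<and>
             (\<forall>n. f (4*n+4) = f (2*n+2) + f n + int (b n) - 1))
            \<longrightarrow> f = v)"
  using v_recurrence_v v_recurrence_unique[OF _ v_recurrence_v]
  unfolding v_recurrence_def by blast

end
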